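(* There exists an online adaptive algorithm that, given an uncertainty matroid $\mathcal{M}$ with uniform query costs and a minimum-weight basis $B$ (with respect to the unknown weights $w$) that can be verified by a minimum-cardinality certificate $Q^*$ of $\mathcal{M}$, queries a set $Q$ with $|Q|\le 2|Q^*|$ that is a certificate verifying $B$.
   Context: A weighted uncertainty matroid $\mathcal{M}=(E,\mathcal{I},A,w)$ consists of a matroid $M=(E,\mathcal{I})$ on a finite set $E$, for each $e\in E$ a non-empty finite union $A_e$ of bounded real intervals (each open or closed), and a weight $w_e\in A_e$. A minimum-weight basis (MWB) is a basis minimizing total weight. A weight assignment is $w^*$ with $w^*_e\in A_e$, consistent with $Q$ if $w^*_e=w_e$ on $Q$. $Q$ verifies an MWB $B$ (is a certificate for $B$) if for every weight assignment consistent with $Q$, $B$ is an MWB with respect to it; a certificate for $\mathcal{M}$ is a set verifying some MWB, and a minimum-cardinality certificate is one of minimum size. In the online adaptive setting the algorithm knows $M$ and the areas $A_e$ but initially not the weights; querying an element $e$ reveals $w_e$ (at unit cost), and the algorithm chooses queries adaptively based on previously revealed weights; $Q$ denotes the set of queried elements. *)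

theory Defs
  imports Complex_Main
begin

definition matroid :: "'a set \<Rightarrow> ('a set \<Rightarrow> bool) \<Rightarrow> bool" where
  "matroid E indep \<longleftrightarrow>
     finite E \<and>
     (\<forall>I. indep I \<longrightarrow> I \<subseteq> E) \<and>
     indep {} \<and>
     (\<forall>I J. indep J \<and> I \<subseteq> J \<longrightarrow> indep I) \<and>
     (\<forall>I J. indep I \<and> indep J \<and> card I < card J \<longrightarrow> (\<exists>x\<in>J - I. indep (insert x I)))"

definition is_basis :: "'a set \<Rightarrow> ('a set \<Rightarrow> bool) \<Rightarrow> 'a set \<Rightarrow> bool" where
  "is_basis E indep B \<longleftrightarrow> indep B \<and> (\<forall>x\<in>E - B. \<not> indep (insert x B))"

definition bounded_interval :: "real set \<Rightarrow> bool" where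
  "bounded_interval I \<longleftrightarrow> (\<exists>a b. I = {a..b} \<or> I = {a<..<b})"

definition uncertainty_area :: "real set \<Rightarrow> bool" where
  "uncertainty_area S \<longleftrightarrow>
     S \<noteq> {} \<and> (\<exists>F. finite F \<and> F \<noteq> {} \<and> (\<forall>I\<in>F. bounded_interval I) \<and> S = \<Union>F)"

definition weighted_uncertainty_matroid ::
  "'a set \<Rightarrow> ('a set \<Rightarrow> bool) \<Rightarrow> ('a \<Rightarrow> real set) \<Rightarrow> ('a \<Rightarrow> real) \<Rightarrow> bool" where
  "weighted_uncertainty_matroid E indep A w \<longleftrightarrow>
     matroid E indep \<and> (\<forall>e\<in>E. uncertainty_area (A e) \<and> w e \<in> A e)"

definition is_mwb :: "'a set \<Rightarrow> ('a set \<Rightarrow> bool) \<Rightarrow> ('a \<Rightarrow> real) \<Rightarrow> 'a set \<Rightarrow> bool" where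
  "is_mwb E indep w B \<longleftrightarrow>
     is_basis E indep B \<and> (\<forall>B'. is_basis E indep B' \<longrightarrow> sum w B \<le> sum w B')"

definition weight_assignment :: "'a set \<Rightarrow> ('a \<Rightarrow> real set) \<Rightarrow> ('a \<Rightarrow> real) \<Rightarrow> bool" where
  "weight_assignment E A w' \<longleftrightarrow> (\<forall>e\<in>E. w' e \<in> A e)"

definition consistent_with :: "'a set \<Rightarrow> ('a \<Rightarrow> real) \<Rightarrow> ('a \<Rightarrow> real) \<Rightarrow> bool" where
  "consistent_with Q w w' \<longleftrightarrow> (\<forall>e\<in>Q. w' e = w e)"

definition verifies ::
  "'a set \<Rightarrow> ('a set \<Rightarrow> bool) \<Rightarrow> ('a \<Rightarrow> real set) \<Rightarrow> ('a \<Rightarrow> real) \<Rightarrow> 'a set \<Rightarrow> 'a set \<Rightarrow> bool" where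
  "verifies E indep A w Q B \<longleftrightarrow>
     Q \<subseteq> E \<and>
     (\<forall>w'. weight_assignment E A w' \<and> consistent_with Q w w' \<longrightarrow> is_mwb E indep w' B)"

definition certificate ::
  "'a set \<Rightarrow> ('a set \<Rightarrow> bool) \<Rightarrow> ('a \<Rightarrow> real set) \<Rightarrow> ('a \<Rightarrow> real) \<Rightarrow> 'a set \<Rightarrow> bool" where
  "certificate E indep A w Q \<longleftrightarrow> (\<exists>B. verifies E indep A w Q B)"

definition min_certificate ::
  "'a set \<Rightarrow> ('a set \<Rightarrow> bool) \<Rightarrow> ('a \<Rightarrow> real set) \<Rightarrow> ('a \<Rightarrow> real) \<Rightarrow> 'a set \<Rightarrow> bool" where
  "min_certificate E indep A w Q \<longleftrightarrow>
     certificate E indep A w Q \<and> (\<forall>Q'. certificate E indep A w Q' \<longrightarrow> card Q \<le> card Q')"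

text \<open>A query strategy maps the currently revealed weights (a partial map whose
  domain is the set of elements queried so far) to the next element to query,
  or None to stop. An online adaptive algorithm maps the known input
  (E, indep, A, B) -- but not the hidden weights -- to such a strategy.\<close>

type_synonym 'a strategy = "('a \<rightharpoonup> real) \<Rightarrow> 'a option"

type_synonym 'a algorithm =
  "'a set \<Rightarrow> ('a set \<Rightarrow> bool) \<Rightarrow> ('a \<Rightarrow> real set) \<Rightarrow> 'a set \<Rightarrow> 'a strategy"

fun run :: "'a strategy \<Rightarrow> ('a \<Rightarrow> real) \<Rightarrow> nat \<Rightarrow> ('a \<rightharpoonup> real)" where
  "run f w 0 = Map.empty"
| "run f w (Suc k) = (case f (run f w k) of
       None \<Rightarrow> run f w k
     | Some e \<Rightarrow> (run f w k)(e \<mapsto> w e))"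

definition terminates_with :: "'a strategy \<Rightarrow> ('a \<Rightarrow> real) \<Rightarrow> 'a set \<Rightarrow> bool" where
  "terminates_with f w Q \<longleftrightarrow> (\<exists>k. f (run f w k) = None \<and> dom (run f w k) = Q)"

end

theory Submission
  imports Defs
begin

text \<open>By the exchange property, a basis B is a minimum-weight basis as soon as no single swap
  B - f + e (with f in B, e outside B and B - f + e a basis) lowers its weight. The algorithm knows
  B; in each round it queries both elements of a swap that could still lower the weight of B under
  some weights consistent with what has been revealed, and it stops when no such swap is left, at
  which point the revealed set verifies B. Any certificate Q for B contains an unrevealed element of
  each such swap: otherwise the true weights, changed on f and e only, would be consistent with Q
  and make B non-optimal. So every round reveals at most two elements, at least one of them in Q.
  A strategy sees only the revealed weights and queries one element at a time, so it replays the
  rounds from the revealed weights.\<close>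

section \<open>Matroids and local optimality of bases\<close>

lemma matroid_finite: "matroid E indep \<Longrightarrow> finite E"
  unfolding matroid_def by blast

lemma matroid_indep_subset: "matroid E indep \<Longrightarrow> indep I \<Longrightarrow> I \<subseteq> E"
  unfolding matroid_def by blast

lemma matroid_indep_mono: "matroid E indep \<Longrightarrow> indep J \<Longrightarrow> I \<subseteq> J \<Longrightarrow> indep I"
  unfolding matroid_def by blast

lemma matroid_augment:
  "matroid E indep \<Longrightarrow> indep I \<Longrightarrow> indep J \<Longrightarrow> card I < card J \<Longrightarrow> \<exists>x\<in>J - I. indep (insert x I)"
  unfolding matroid_def by blast

lemma matroid_indep_finite: "matroid E indep \<Longrightarrow> indep I \<Longrightarrow> finite I"
  by (rule finite_subset[OF matroid_indep_subset matroid_finite])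

lemma basis_indep: "is_basis E indep B \<Longrightarrow> indep B"
  unfolding is_basis_def by blast

lemma matroid_extend_indep:
  assumes M: "matroid E indep" and "indep I" "indep J" "card I \<le> card J"
  shows "\<exists>K. indep K \<and> I \<subseteq> K \<and> K \<subseteq> I \<union> J \<and> card K = card J"
  using assms(2-4)
proof (induction "card J - card I" arbitrary: I)
  case 0
  then show ?case by auto
next
  case (Suc n)
  then have "card I < card J" by linarith
  then obtain x where x: "x \<in> J - I" "indep (insert x I)"
    using matroid_augment[OF M] Suc.prems by blast
  have "card (insert x I) = Suc (card I)"
    using x matroid_indep_finite[OF M \<open>indep I\<close>] by simp
  then have "n = card J - card (insert x I)" "card (insert x I) \<le> card J"
    using Suc.hyps(2) by auto
  then obtain K where "indep K" "insert x I \<subseteq> K" "K \<subseteq> insert x I \<union> J" "card K = card J"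
    using Suc.hyps(1) x(2) Suc.prems(2) by blast
  then show ?case using x by blast
qed

lemma basis_if_indep_card_ge:
  assumes M: "matroid E indep" and B: "is_basis E indep B" and K: "indep K"
    and card_le: "card B \<le> card K"
  shows "is_basis E indep K"
  unfolding is_basis_def
proof (intro conjI K ballI notI)
  fix z assume z: "z \<in> E - K" and indep_zK: "indep (insert z K)"
  have "card B < card (insert z K)"
    using z card_le matroid_indep_finite[OF M K] by simp
  then obtain u where "u \<in> insert z K - B" "indep (insert u B)"
    using matroid_augment[OF M basis_indep[OF B] indep_zK] by blast
  moreover have "u \<in> E" using matroid_indep_subset[OF M \<open>indep (insert u B)\<close>] by blast
  ultimately show False using B unfolding is_basis_def by blast
qed

lemma basis_exchange:
  assumes M: "matroid E indep" and B: "is_basis E indep B" and I: "indep I" and x: "x \<in> I - B"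
  shows "\<exists>y\<in>B - I. is_basis E indep (insert x (B - {y}))"
proof -
  let ?J = "insert x (B \<inter> I)"
  have finB: "finite B" using matroid_indep_finite[OF M basis_indep[OF B]] .
  have xE: "x \<in> E" using x matroid_indep_subset[OF M I] by blast
  have indep_J: "indep ?J" by (rule matroid_indep_mono[OF M I]) (use x in blast)
  have "card ?J \<le> card B"
  proof (rule ccontr)
    assume "\<not> card ?J \<le> card B"
    then obtain u where "u \<in> ?J - B" "indep (insert u B)"
      using matroid_augment[OF M basis_indep[OF B] indep_J] by auto
    then have "indep (insert x B)" by blast
    then show False using B xE x unfolding is_basis_def by blast
  qed
  then obtain K where K: "indep K" "?J \<subseteq> K" "K \<subseteq> insert x B" "card K = card B"
    using matroid_extend_indep[OF M indep_J basis_indep[OF B]] by auto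
  have "\<not> insert x B \<subseteq> K"
  proof
    assume "insert x B \<subseteq> K"
    then have "K = insert x B" using K(3) by blast
    then show False using K(4) x finB by simp
  qed
  then obtain y where y: "y \<in> insert x B" "y \<notin> K" by blast
  have y_BI: "y \<in> B - I" using y K(2) by auto
  have "K \<subseteq> insert x (B - {y})" using K(3) y by blast
  moreover have "card (insert x (B - {y})) = card K"
  proof -
    have "card (insert x (B - {y})) = Suc (card (B - {y}))" using finB x by simp
    also have "\<dots> = card B" using card_Suc_Diff1[OF finB] y_BI by blast
    finally show ?thesis using K(4) by simp
  qed
  ultimately have "K = insert x (B - {y})"
    using finB by (intro card_subset_eq) simp_all
  then show ?thesis using basis_if_indep_card_ge[OF M B K(1)] K(4) y_BI by auto
qed

lemma sum_swap:
  fixes w :: "'a \<Rightarrow> real"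
  shows "finite B \<Longrightarrow> f \<in> B \<Longrightarrow> e \<notin> B \<Longrightarrow> sum w (insert e (B - {f})) = sum w B - w f + w e"
  by (simp add: sum_diff1)

lemma mwb_swap_le:
  fixes w :: "'a \<Rightarrow> real"
  assumes "is_mwb E indep w B" "finite B" "f \<in> B" "e \<notin> B" "is_basis E indep (insert e (B - {f}))"
  shows "w f \<le> w e"
proof -
  have "sum w B \<le> sum w (insert e (B - {f}))" using assms unfolding is_mwb_def by blast
  then show ?thesis using sum_swap[of B f e w] assms by simp
qed

lemma light_element_if_no_improving_swap:
  fixes w :: "'a \<Rightarrow> real"
  assumes M: "matroid E indep" and B: "is_basis E indep B"
    and no_swap: "\<And>f e. f \<in> B \<Longrightarrow> e \<in> E - B \<Longrightarrow> is_basis E indep (insert e (B - {f})) \<Longrightarrow> w f \<le> w e"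
    and S: "is_basis E indep S" "S \<noteq> B"
  shows "\<exists>f\<in>B - S. \<forall>y\<in>S - B. w f \<le> w y"
proof -
  let ?D = "(B - S) \<union> (S - B)"
  have "finite ?D" "?D \<noteq> {}"
    using S matroid_indep_finite[OF M basis_indep[OF B]] matroid_indep_finite[OF M basis_indep[OF S(1)]]
    by auto
  then obtain x where x: "x \<in> ?D" "\<forall>y\<in>?D. w x \<le> w y"
    using arg_min_if_finite[of ?D w] by (meson not_le)
  show ?thesis
  proof (cases "x \<in> B")
    case True
    then show ?thesis using x by blast
  next
    case False
    then have "x \<in> S - B" using x by blast
    then obtain f where f: "f \<in> B - S" "is_basis E indep (insert x (B - {f}))"
      using basis_exchange[OF M B basis_indep[OF S(1)]] by blast
    have "x \<in> E" using matroid_indep_subset[OF M basis_indep[OF S(1)]] \<open>x \<in> S - B\<close> by blast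
    then have "w f \<le> w x" using no_swap f \<open>x \<in> S - B\<close> by blast
    then show ?thesis using x f(1) by (fastforce intro: order_trans)
  qed
qed

lemma mwb_if_no_improving_swap:
  fixes w :: "'a \<Rightarrow> real"
  assumes M: "matroid E indep" and B: "is_basis E indep B"
    and no_swap: "\<And>f e. f \<in> B \<Longrightarrow> e \<in> E - B \<Longrightarrow> is_basis E indep (insert e (B - {f})) \<Longrightarrow> w f \<le> w e"
  shows "is_mwb E indep w B"
proof -
  have "sum w B \<le> sum w S" if "is_basis E indep S" for S
    using that
  proof (induction "card (S - B)" arbitrary: S rule: less_induct)
    case less
    show ?case
    proof (cases "S = B")
      case True
      then show ?thesis by simp
    next
      case False
      from light_element_if_no_improving_swap[OF M B no_swap less.prems False]
      obtain f where f: "f \<in> B - S" "\<forall>y\<in>S - B. w f \<le> w y" ..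
      obtain e where e: "e \<in> S - B" "is_basis E indep (insert f (S - {e}))"
        using basis_exchange[OF M less.prems basis_indep[OF B] f(1)] by blast
      let ?S' = "insert f (S - {e})"
      have finS: "finite S" using matroid_indep_finite[OF M basis_indep[OF less.prems]] .
      have "w f \<le> w e" using f(2) e(1) by blast
      then have "sum w ?S' \<le> sum w S" using sum_swap[OF finS, of e f w] e(1) f(1) by simp
      moreover have "card (?S' - B) < card (S - B)"
      proof -
        have "?S' - B = (S - B) - {e}" using e(1) f(1) by blast
        then show ?thesis using card_Diff1_less[of "S - B" e] e(1) finS by simp
      qed
      then have "sum w B \<le> sum w ?S'" using less.hyps e(2) by blast
      ultimately show ?thesis by linarith
    qed
  qed
  then show ?thesis using B unfolding is_mwb_def by blast
qed

section \<open>Strategies replaying rounds of queries\<close>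

text \<open>A round-based query algorithm: step v R is the set revealed after the next round, computed
  from the weights v on the set R revealed so far.\<close>

locale query_rounds =
  fixes step :: "('a \<Rightarrow> real) \<Rightarrow> 'a set \<Rightarrow> 'a set"
  assumes step_extensive: "X \<subseteq> step v X"
    and step_cong: "\<forall>x\<in>X. v x = v' x \<Longrightarrow> step v X = step v' X"
begin

abbreviation rounds :: "('a \<Rightarrow> real) \<Rightarrow> nat \<Rightarrow> 'a set" where
  "rounds v k \<equiv> (step v ^^ k) {}"

lemma rounds_mono: "k \<le> l \<Longrightarrow> rounds v k \<subseteq> rounds v l"
  by (rule lift_Suc_mono_le[of "\<lambda>k. rounds v k"]) (simp_all add: step_extensive)

lemma rounds_subset:
  assumes "\<And>X. X \<subseteq> S \<Longrightarrow> step v X \<subseteq> S"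
  shows "rounds v k \<subseteq> S"
  by (induction k) (simp_all add: assms)

lemma rounds_fixpoint_exists:
  assumes "finite S" and "\<And>X. X \<subseteq> S \<Longrightarrow> step v X \<subseteq> S"
  shows "\<exists>j. step v (rounds v j) = rounds v j"
proof -
  have "rounds v k \<subseteq> S" for k using assms(2) by (rule rounds_subset)
  then have "range (\<lambda>k. rounds v k) \<subseteq> Pow S" by blast
  then have "finite (range (\<lambda>k. rounds v k))" using assms(1) by (meson finite_Pow_iff finite_subset)
  moreover have "mono (\<lambda>k. rounds v k)"
    by (rule monoI) (rule rounds_mono)
  moreover have "\<forall>n. rounds v n = rounds v (Suc n) \<longrightarrow> rounds v (Suc n) = rounds v (Suc (Suc n))"
  proof (intro allI impI)
    fix n
    assume stable: "rounds v n = rounds v (Suc n)"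
    have "rounds v (Suc (Suc n)) = step v (rounds v (Suc n))" by simp
    also have "\<dots> = step v (rounds v n)" by (simp only: stable)
    also have "\<dots> = rounds v (Suc n)" by simp
    finally show "rounds v (Suc n) = rounds v (Suc (Suc n))" by (rule sym)
  qed
  ultimately obtain j where j: "\<forall>n\<ge>j. rounds v j = rounds v n"
    by (blast dest: finite_mono_remains_stable_implies_strict_prefix)
  have "j \<le> Suc j" by simp
  with j have "rounds v (Suc j) = rounds v j" by (metis sym)
  then have "step v (rounds v j) = rounds v j" by (simp only: funpow.simps comp_apply)
  then show ?thesis ..
qed

lemma rounds_le_fixpoint:
  assumes "step v (rounds v j) = rounds v j"
  shows "rounds v i \<subseteq> rounds v j"
proof (cases "i \<le> j")
  case True
  then show ?thesis by (rule rounds_mono)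
next
  case False
  define d where "d = i - j"
  have "(step v ^^ d) (rounds v j) = rounds v j"
    by (induction d) (simp_all add: assms)
  moreover have "i = d + j" using False d_def by simp
  ultimately show ?thesis by (simp add: funpow_add)
qed

lemma rounds_cong:
  assumes "rounds w k \<subseteq> D" and agree: "\<forall>x\<in>D. v x = w x"
  shows "rounds v k = rounds w k" and "rounds v (Suc k) = rounds w (Suc k)"
proof -
  show eq: "rounds v k = rounds w k"
    using assms(1)
  proof (induction k)
    case 0
    show ?case by simp
  next
    case (Suc k)
    have "rounds w k \<subseteq> D"
      using Suc.prems step_extensive[of "rounds w k" w] by simp
    then have "rounds v k = rounds w k" by (rule Suc.IH)
    moreover have "step v (rounds w k) = step w (rounds w k)"
      using \<open>rounds w k \<subseteq> D\<close> agree by (intro step_cong) blast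
    ultimately show ?case by simp
  qed
  have "step v (rounds w k) = step w (rounds w k)"
    using assms by (intro step_cong) blast
  then show "rounds v (Suc k) = rounds w (Suc k)" using eq by simp
qed

definition pending :: "('a \<Rightarrow> real) \<Rightarrow> 'a set \<Rightarrow> 'a set" where
  "pending v D = {x. \<exists>k. rounds v k \<subseteq> D \<and> x \<in> rounds v (Suc k) - D}"

lemma pending_subset_cong:
  assumes agree: "\<forall>x\<in>D. v x = w x"
  shows "pending v D \<subseteq> pending w D"
proof
  fix x
  assume "x \<in> pending v D"
  then obtain k where k: "rounds v k \<subseteq> D" "x \<in> rounds v (Suc k) - D"
    unfolding pending_def by blast
  have "\<forall>x\<in>D. w x = v x" using agree by simp
  from rounds_cong[OF k(1) this] have "rounds w k \<subseteq> D \<and> x \<in> rounds w (Suc k) - D"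
    using k by (simp only:)
  then show "x \<in> pending w D" unfolding pending_def by blast
qed

lemma pending_cong: "\<forall>x\<in>D. v x = w x \<Longrightarrow> pending v D = pending w D"
  by (simp add: pending_subset_cong subset_antisym)

lemma pending_subset:
  assumes "step w (rounds w j) = rounds w j"
  shows "pending w D \<subseteq> rounds w j - D"
  unfolding pending_def using rounds_le_fixpoint[OF assms] by blast

lemma pending_empty_iff:
  assumes "step w (rounds w j) = rounds w j"
  shows "pending w D = {} \<longleftrightarrow> rounds w j \<subseteq> D"
proof
  assume none: "pending w D = {}"
  have "rounds w k \<subseteq> D" for k
  proof (induction k)
    case 0
    show ?case by simp
  next
    case (Suc k)
    then show ?case using none unfolding pending_def by blast
  qed
  then show "rounds w j \<subseteq> D" .
next
  assume "rounds w j \<subseteq> D"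
  then show "pending w D = {}" using pending_subset[OF assms] by blast
qed

text \<open>The strategy queries an unrevealed element of the first round that is not yet revealed
  completely. The values the (m x) for x outside dom m are junk, but rounds contained in dom m do not
  depend on them.\<close>

definition follow :: "'a strategy" where
  "follow m = (let P = pending (\<lambda>x. the (m x)) (dom m) in if P = {} then None else Some (SOME x. x \<in> P))"

lemma follow_eq:
  assumes "m \<subseteq>\<^sub>m Some \<circ> w"
  shows "follow m = (if pending w (dom m) = {} then None else Some (SOME x. x \<in> pending w (dom m)))"
proof -
  have "\<forall>x\<in>dom m. the (m x) = w x" using assms by (auto simp: map_le_def)
  then show ?thesis unfolding follow_def Let_def by (simp only: pending_cong)
qed

lemma follow_Some:
  assumes "m \<subseteq>\<^sub>m Some \<circ> w" and fixpoint: "step w (rounds w j) = rounds w j" and "follow m = Some x"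
  shows "x \<in> rounds w j - dom m"
proof -
  have "pending w (dom m) \<noteq> {}" and x: "x = (SOME x. x \<in> pending w (dom m))"
    using assms follow_eq[OF assms(1)] by (auto split: if_splits)
  then have "x \<in> pending w (dom m)" by (simp add: some_in_eq)
  then show ?thesis using pending_subset[OF fixpoint] by blast
qed

lemma follow_None_iff:
  assumes "m \<subseteq>\<^sub>m Some \<circ> w" and "step w (rounds w j) = rounds w j"
  shows "follow m = None \<longleftrightarrow> rounds w j \<subseteq> dom m"
  using follow_eq[OF assms(1)] pending_empty_iff[OF assms(2)] by simp

lemma run_follow_invariant:
  assumes fixpoint: "step w (rounds w j) = rounds w j"
  shows "run follow w t \<subseteq>\<^sub>m Some \<circ> w \<and> dom (run follow w t) \<subseteq> rounds w j"
proof (induction t)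
  case 0
  show ?case by simp
next
  case (Suc t)
  show ?case
  proof (cases "follow (run follow w t)")
    case None
    then show ?thesis using Suc.IH by simp
  next
    case (Some x)
    then have x: "x \<in> rounds w j" using follow_Some[OF _ fixpoint] Suc.IH by blast
    have step: "run follow w (Suc t) = (run follow w t)(x \<mapsto> w x)" using Some by simp
    show ?thesis
    proof
      show "run follow w (Suc t) \<subseteq>\<^sub>m Some \<circ> w" using Suc.IH unfolding step map_le_def by auto
      show "dom (run follow w (Suc t)) \<subseteq> rounds w j" using Suc.IH x unfolding step by simp
    qed
  qed
qed

lemma run_follow_progress:
  assumes fixpoint: "step w (rounds w j) = rounds w j" and fin: "finite (rounds w j)"
  shows "follow (run follow w t) = None \<or> t \<le> card (dom (run follow w t))"
proof (induction t)
  case 0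
  show ?case by simp
next
  case (Suc t)
  let ?m = "run follow w t"
  show ?case
  proof (cases "follow ?m")
    case None
    then show ?thesis by simp
  next
    case (Some x)
    have le: "?m \<subseteq>\<^sub>m Some \<circ> w" "dom ?m \<subseteq> rounds w j" using run_follow_invariant[OF fixpoint] by blast+
    have "x \<notin> dom ?m" using follow_Some[OF le(1) fixpoint Some] by blast
    moreover have "finite (dom ?m)" using finite_subset[OF le(2) fin] .
    moreover have "dom (run follow w (Suc t)) = insert x (dom ?m)" using Some by simp
    moreover have "t \<le> card (dom ?m)" using Suc.IH Some by simp
    ultimately show ?thesis by simp
  qed
qed

theorem terminates_with_follow:
  assumes fixpoint: "step w (rounds w j) = rounds w j" and fin: "finite (rounds w j)"
  shows "terminates_with follow w (rounds w j)"
proof -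
  let ?m = "run follow w (Suc (card (rounds w j)))"
  have le: "?m \<subseteq>\<^sub>m Some \<circ> w" "dom ?m \<subseteq> rounds w j" using run_follow_invariant[OF fixpoint] by blast+
  then have "card (dom ?m) < Suc (card (rounds w j))" using card_mono[OF fin] by (simp add: le_imp_less_Suc)
  then have stop: "follow ?m = None" using run_follow_progress[OF fixpoint fin] by (meson not_le)
  then have "dom ?m = rounds w j" using follow_None_iff[OF le(1) fixpoint] le(2) by blast
  then show ?thesis unfolding terminates_with_def using stop by blast
qed

end

section \<open>Verifying a known basis by swaps\<close>

context
  fixes E :: "'a set" and indep :: "'a set \<Rightarrow> bool" and A :: "'a \<Rightarrow> real set" and B :: "'a set"
begin

fun possibly_improving_swap :: "('a \<Rightarrow> real) \<Rightarrow> 'a set \<Rightarrow> 'a \<times> 'a \<Rightarrow> bool" where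
  "possibly_improving_swap v R (f, e) \<longleftrightarrow>
     f \<in> B \<and> e \<in> E - B \<and> is_basis E indep (insert e (B - {f})) \<and>
     (\<exists>w'. weight_assignment E A w' \<and> (\<forall>x\<in>R. w' x = v x) \<and> w' e < w' f)"

definition swap_round :: "('a \<Rightarrow> real) \<Rightarrow> 'a set \<Rightarrow> 'a set" where
  "swap_round v R =
     (if \<exists>p. possibly_improving_swap v R p
      then (case SOME p. possibly_improving_swap v R p of (f, e) \<Rightarrow> insert f (insert e R))
      else R)"

lemma swap_round_cases:
  obtains (final) "\<And>p. \<not> possibly_improving_swap v R p" "swap_round v R = R"
  | (swap) f e where "possibly_improving_swap v R (f, e)" "swap_round v R = insert f (insert e R)"
proof (cases "\<exists>p. possibly_improving_swap v R p")
  case True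
  obtain f e where p: "(SOME p. possibly_improving_swap v R p) = (f, e)" by fastforce
  have "possibly_improving_swap v R (f, e)" using someI_ex[OF True] unfolding p .
  moreover have "swap_round v R = insert f (insert e R)"
    unfolding swap_round_def if_P[OF True] p by simp
  ultimately show ?thesis by (rule swap)
next
  case False
  then have "\<And>p. \<not> possibly_improving_swap v R p" by blast
  moreover have "swap_round v R = R" using False unfolding swap_round_def by (rule if_not_P)
  ultimately show ?thesis by (rule final)
qed

lemma query_rounds_swap_round: "query_rounds swap_round"
proof
  fix X v
  show "X \<subseteq> swap_round v X" by (cases rule: swap_round_cases[of v X]) auto
next
  fix X :: "'a set" and v v' :: "'a \<Rightarrow> real"
  assume "\<forall>x\<in>X. v x = v' x"
  then have "possibly_improving_swap v X p = possibly_improving_swap v' X p" for p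
    by (cases p) auto
  then have "possibly_improving_swap v X = possibly_improving_swap v' X" by (rule ext)
  then show "swap_round v X = swap_round v' X" unfolding swap_round_def by (simp only:)
qed

lemma swap_round_subset:
  assumes M: "matroid E indep" and "indep B" and "R \<subseteq> E"
  shows "swap_round v R \<subseteq> E"
proof (cases rule: swap_round_cases[of v R])
  case final
  then show ?thesis using assms(3) by simp
next
  case (swap f e)
  then show ?thesis using assms matroid_indep_subset[OF M \<open>indep B\<close>] by auto
qed

lemma possibly_improving_swap_unrevealed:
  assumes M: "matroid E indep" and mwb: "is_mwb E indep w B"
    and swap: "possibly_improving_swap w R (f, e)"
  shows "\<not> {f, e} \<subseteq> R"
proof
  assume revealed: "{f, e} \<subseteq> R"
  from swap obtain w' where "\<forall>x\<in>R. w' x = w x" "w' e < w' f" by auto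
  with revealed have "w e < w f" by auto
  moreover have "finite B" using M mwb unfolding is_mwb_def by (meson basis_indep matroid_indep_finite)
  then have "w f \<le> w e" using mwb_swap_le[OF mwb] swap by auto
  ultimately show False by simp
qed

lemma no_possibly_improving_swap_at_fixpoint:
  assumes M: "matroid E indep" and mwb: "is_mwb E indep w B" and fixed: "swap_round w R = R"
  shows "\<not> possibly_improving_swap w R p"
proof (cases rule: swap_round_cases[of w R])
  case final
  then show ?thesis by blast
next
  case (swap f e)
  then have "{f, e} \<subseteq> R" using fixed by auto
  then show ?thesis using possibly_improving_swap_unrevealed[OF M mwb swap(1)] by blast
qed

lemma verifies_if_no_possibly_improving_swap:
  assumes M: "matroid E indep" and B: "is_basis E indep B" and "R \<subseteq> E"
    and none: "\<And>p. \<not> possibly_improving_swap w R p"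
  shows "verifies E indep A w R B"
  unfolding verifies_def
proof (intro conjI allI impI)
  show "R \<subseteq> E" by fact
  fix w'
  assume w': "weight_assignment E A w' \<and> consistent_with R w w'"
  show "is_mwb E indep w' B"
  proof (rule mwb_if_no_improving_swap[OF M B])
    fix f e
    assume swap: "f \<in> B" "e \<in> E - B" "is_basis E indep (insert e (B - {f}))"
    show "w' f \<le> w' e"
    proof (rule ccontr)
      assume "\<not> w' f \<le> w' e"
      then have "possibly_improving_swap w R (f, e)"
        using swap w' unfolding consistent_with_def by auto
      then show False using none by blast
    qed
  qed
qed

lemma certificate_meets_possibly_improving_swap:
  assumes M: "matroid E indep" and w: "weight_assignment E A w"
    and Q: "verifies E indep A w Q B" and swap: "possibly_improving_swap w R (f, e)"
  shows "\<exists>y\<in>Q. y \<in> {f, e} - R"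
proof (rule ccontr)
  assume miss: "\<not> (\<exists>y\<in>Q. y \<in> {f, e} - R)"
  from swap obtain w' where f: "f \<in> B" and e: "e \<in> E - B"
    and basis: "is_basis E indep (insert e (B - {f}))"
    and w': "weight_assignment E A w'" "\<forall>x\<in>R. w' x = w x" "w' e < w' f"
    by auto
  define u where "u x = (if x \<in> {f, e} then w' x else w x)" for x
  have "weight_assignment E A u" using w w'(1) unfolding weight_assignment_def u_def by auto
  moreover have "consistent_with Q w u" using miss w'(2) unfolding consistent_with_def u_def by auto
  ultimately have mwb: "is_mwb E indep u B" using Q unfolding verifies_def by blast
  then have "finite B" unfolding is_mwb_def by (meson M basis_indep matroid_indep_finite)
  then have "u f \<le> u e" using mwb_swap_le[OF mwb _ f _ basis] e by blast
  then show False using w'(3) unfolding u_def by simp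
qed

lemma card_swap_rounds_le:
  assumes M: "matroid E indep" and w: "weight_assignment E A w" and Q: "verifies E indep A w Q B"
  shows "card ((swap_round w ^^ k) {}) \<le> 2 * card (Q \<inter> (swap_round w ^^ k) {})"
proof (induction k)
  case 0
  show ?case by simp
next
  case (Suc k)
  let ?R = "(swap_round w ^^ k) {}"
  have "Q \<subseteq> E" using Q unfolding verifies_def by blast
  then have "finite Q" using matroid_finite[OF M] by (rule finite_subset)
  show ?case
  proof (cases rule: swap_round_cases[of w ?R])
    case final
    then show ?thesis using Suc.IH by simp
  next
    case (swap f e)
    obtain y where y: "y \<in> Q" "y \<in> {f, e} - ?R"
      using certificate_meets_possibly_improving_swap[OF M w Q swap(1)] by blast
    have "card (insert f (insert e ?R)) \<le> card ?R + 2"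
      by (cases "finite ?R") (simp_all add: card_insert_if)
    moreover have "insert y (Q \<inter> ?R) \<subseteq> Q \<inter> insert f (insert e ?R)" using y by blast
    then have "Suc (card (Q \<inter> ?R)) \<le> card (Q \<inter> insert f (insert e ?R))"
      using y \<open>finite Q\<close> by (metis card_insert_disjoint card_mono finite_Int DiffD2 IntD2 finite_insert)
    ultimately show ?thesis using Suc.IH swap(2) by simp
  qed
qed

lemma card_swap_rounds_le_certificate:
  assumes M: "matroid E indep" and w: "weight_assignment E A w" and Q: "verifies E indep A w Q B"
  shows "card ((swap_round w ^^ k) {}) \<le> 2 * card Q"
proof -
  have "Q \<subseteq> E" using Q unfolding verifies_def by blast
  then have "card (Q \<inter> (swap_round w ^^ k) {}) \<le> card Q"
    using finite_subset[OF _ matroid_finite[OF M]] by (simp add: card_mono)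
  then show ?thesis using card_swap_rounds_le[OF M w Q, of k] by linarith
qed

end

theorem lemma30:
  "\<exists>alg :: 'a algorithm.
     \<forall>E indep A w B Qstar.
       weighted_uncertainty_matroid E indep A w \<and>
       is_mwb E indep w B \<and>
       min_certificate E indep A w Qstar \<and>
       verifies E indep A w Qstar B
       \<longrightarrow> (\<exists>Q. terminates_with (alg E indep A B) w Q \<and>
                card Q \<le> 2 * card Qstar \<and>
                verifies E indep A w Q B)"
proof (intro exI[of _ "\<lambda>E indep A B. query_rounds.follow (swap_round E indep A B)"] allI impI)
  fix E indep A w B Qstar
  assume "weighted_uncertainty_matroid E indep A w \<and> is_mwb E indep w B \<and>
    min_certificate E indep A w Qstar \<and> verifies E indep A w Qstar B"
  then have M: "matroid E indep" and w: "weight_assignment E A w" and mwb: "is_mwb E indep w B"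
    and V: "verifies E indep A w Qstar B"
    unfolding weighted_uncertainty_matroid_def weight_assignment_def by blast+
  interpret query_rounds "swap_round E indep A B" by (rule query_rounds_swap_round)
  have B: "is_basis E indep B" using mwb unfolding is_mwb_def by blast
  have closed: "\<And>X. X \<subseteq> E \<Longrightarrow> swap_round E indep A B w X \<subseteq> E"
    using swap_round_subset[OF M basis_indep[OF B]] .
  obtain j where fixed: "swap_round E indep A B w (rounds w j) = rounds w j"
    using rounds_fixpoint_exists[OF matroid_finite[OF M] closed] by blast
  have sub: "rounds w j \<subseteq> E" using closed by (rule rounds_subset)
  have "terminates_with follow w (rounds w j)"
    using terminates_with_follow[OF fixed finite_subset[OF sub matroid_finite[OF M]]] .
  moreover have "card (rounds w j) \<le> 2 * card Qstar"
    using card_swap_rounds_le_certificate[OF M w V] .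
  moreover have "verifies E indep A w (rounds w j) B"
    using verifies_if_no_possibly_improving_swap[OF M B sub]
      no_possibly_improving_swap_at_fixpoint[OF M mwb fixed] by blast
  ultimately show "\<exists>Q. terminates_with follow w Q \<and> card Q \<le> 2 * card Qstar \<and> verifies E indep A w Q B"
    by blast
qed

end
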